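(* Let $B_0,B_1,\dots,B_{p-1}$ be $p$-dimensional subspaces of $\mathcal M_p(\mathbb C)$, mutually orthogonal for the Hilbert–Schmidt inner product, with $B_0$ the subspace of all diagonal matrices. Let $J_c$ be the passage matrix of a cycle $c$ of maximal length. Then $J_cB_l=B_{l+1}$ for all $0\le l\le p-1$ (with $l+1$ taken mod $p$) if and only if $B_l=\mathrm{span}\{|e_{c(k)}\rangle\langle e_{c(k+l)}|:k=0,1,\dots,p-1\}$ for all $0\le l\le p-1$, where indices are taken mod $p$.
   Context: $\{e_j\}$ canonical basis of $\mathbb C^p$; Hilbert–Schmidt inner product $\langle a,b\rangle=\mathrm{tr}(a^*b)$; $J_cB_l=\{J_cx:x\in B_l\}$. A cycle of maximal length is an ordered sequence $c=(c(0),\dots,c(p-1))$ of the $p$ distinct elements of $\{0,\dots,p-1\}$ (up to cyclic permutation), with passage matrix $J_c=\sum_{i=0}^{p-1}|e_{c(i)}\rangle\langle e_{c(i+1)}|$ (indices mod $p$). *)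

theory Defs
  imports "HOL-Analysis.Analysis"
begin

text \<open>Complex p x p matrices are modelled as complex^'n^'n with p = CARD('n).
  The complex scalar multiplication on matrices:\<close>
definition mscale :: "complex \<Rightarrow> complex^'n^'n \<Rightarrow> complex^'n^'n" where
  "mscale c A = (\<chi> i j. c * A $ i $ j)"

interpretation mat: vector_space "mscale :: complex \<Rightarrow> complex^'n^'n \<Rightarrow> complex^'n^'n"
  by unfold_locales (auto simp: mscale_def vec_eq_iff algebra_simps)

definition hs_inner :: "complex^'n^'n \<Rightarrow> complex^'n^'n \<Rightarrow> complex" where
  "hs_inner a b = (\<Sum>i\<in>UNIV. \<Sum>j\<in>UNIV. cnj (a $ i $ j) * b $ i $ j)"

definition ketbra :: "'n \<Rightarrow> 'n \<Rightarrow> complex^'n^'n" where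
  "ketbra a b = (\<chi> i j. if i = a \<and> j = b then 1 else 0)"

text \<open>A cycle of maximal length: an enumeration c(0),...,c(p-1) of all basis indices.\<close>
definition max_cycle :: "(nat \<Rightarrow> 'n::finite) \<Rightarrow> bool" where
  "max_cycle c \<longleftrightarrow> bij_betw c {..<CARD('n)} UNIV"

definition passage :: "(nat \<Rightarrow> 'n::finite) \<Rightarrow> complex^'n^'n" where
  "passage c = (\<Sum>i<CARD('n). ketbra (c i) (c ((i + 1) mod CARD('n))))"

definition diag_matrices :: "(complex^'n^'n) set" where
  "diag_matrices = {A. \<forall>i j. i \<noteq> j \<longrightarrow> A $ i $ j = 0}"

end

theory Submission
  imports Defs
begin

text \<open>Left multiplication by J_c sends |e_c(k+1)><e_c(k+1+l)| to |e_c(k)><e_c(k+l+1)|, so it maps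
  the spanning set of the l-th proposed subspace onto that of the (l+1)-th, and by linearity the
  spans as well. For l = 0 that span is the diagonal algebra B_0. Hence the spans satisfy
  J_c B_l = B_(l+1), and conversely this relation determines every B_l from B_0 by induction on l.\<close>

lemma sum_matrix_mult:
  "sum f I ** (X :: 'a::comm_semiring_1^'n^'m) = (\<Sum>i\<in>I. f i ** X)"
  by (simp add: vec_eq_iff matrix_matrix_mult_def sum_distrib_right sum.swap[of _ I])

lemma ketbra_mult_ketbra:
  "ketbra a b ** ketbra d e = (if b = d then ketbra a e else (0 :: complex^'n::finite^'n))"
proof -
  have "(ketbra a b ** ketbra d e) $ i $ j = (if b = d then ketbra a e else 0) $ i $ j" for i j
  proof -
    have "(ketbra a b ** ketbra d e) $ i $ j
        = (\<Sum>k\<in>UNIV. if k = b then (if i = a \<and> b = d \<and> j = e then 1 else 0) else (0::complex))"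
      unfolding matrix_matrix_mult_def ketbra_def vec_lambda_beta by (intro sum.cong) auto
    then show ?thesis
      by (simp add: ketbra_def)
  qed
  then show ?thesis
    by (simp add: vec_eq_iff)
qed

lemma left_mult_module_hom:
  "module_hom mscale mscale (\<lambda>X. M ** (X :: complex^'n::finite^'n))"
  unfolding module_hom_iff
  by (simp add: matrix_add_ldistrib vec_eq_iff matrix_matrix_mult_def mscale_def
      sum_distrib_left sum.distrib algebra_simps mat.module_axioms)

lemma add_one_mod_eq_iff:
  fixes i k p :: nat
  assumes "i < p" and "k < p"
  shows "(i + 1) mod p = (k + 1) mod p \<longleftrightarrow> i = k"
  using assms by (auto simp: mod_Suc)

lemma add_one_mod_image: "(\<lambda>k. (k + 1) mod p) ` {..<p} = {..<p :: nat}"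
proof (rule endo_inj_surj)
  show "inj_on (\<lambda>k. (k + 1) mod p) {..<p}"
    by (intro inj_onI) (metis add_one_mod_eq_iff lessThan_iff)
qed auto

lemma passage_mult_ketbra:
  fixes c :: "nat \<Rightarrow> 'n::finite"
  assumes "max_cycle c" and "k < CARD('n)"
  shows "passage c ** ketbra (c ((k + 1) mod CARD('n))) b = ketbra (c k) b"
proof -
  let ?p = "CARD('n)"
  have inj: "inj_on c {..<?p}"
    using assms(1) by (simp add: max_cycle_def bij_betw_def)
  have "c ((i + 1) mod ?p) = c ((k + 1) mod ?p) \<longleftrightarrow> i = k" if "i < ?p" for i
    using inj_on_eq_iff[OF inj] add_one_mod_eq_iff[OF that assms(2)] by simp
  then have "passage c ** ketbra (c ((k + 1) mod ?p)) b = (\<Sum>i<?p. if i = k then ketbra (c i) b else 0)"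
    unfolding passage_def sum_matrix_mult ketbra_mult_ketbra by (intro sum.cong) auto
  also have "\<dots> = ketbra (c k) b"
    using assms(2) by simp
  finally show ?thesis .
qed

definition cycle_diagonal :: "(nat \<Rightarrow> 'n::finite) \<Rightarrow> nat \<Rightarrow> (complex^'n^'n) set" where
  "cycle_diagonal c l = (\<lambda>k. ketbra (c k) (c ((k + l) mod CARD('n)))) ` {..<CARD('n)}"

lemma passage_image_cycle_diagonal:
  fixes c :: "nat \<Rightarrow> 'n::finite"
  assumes "max_cycle c"
  shows "(\<lambda>X. passage c ** X) ` cycle_diagonal c l = cycle_diagonal c ((l + 1) mod CARD('n))"
proof -
  let ?p = "CARD('n)"
  have "cycle_diagonal c l
      = (\<lambda>k. ketbra (c k) (c ((k + l) mod ?p))) ` (\<lambda>k. (k + 1) mod ?p) ` {..<?p}"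
    by (simp only: cycle_diagonal_def add_one_mod_image)
  also have "(\<lambda>X. passage c ** X) ` \<dots>
      = (\<lambda>k. ketbra (c k) (c (((k + 1) mod ?p + l) mod ?p))) ` {..<?p}"
    unfolding image_image by (intro image_cong refl) (metis lessThan_iff passage_mult_ketbra[OF assms])
  also have "\<dots> = cycle_diagonal c ((l + 1) mod ?p)"
    by (simp add: cycle_diagonal_def mod_simps ac_simps)
  finally show ?thesis .
qed

lemma diag_matrices_span: "diag_matrices = mat.span (range (\<lambda>i. ketbra i i))"
proof
  have "mat.subspace diag_matrices"
    by (auto simp: mat.subspace_def diag_matrices_def mscale_def)
  moreover have "range (\<lambda>i. ketbra i i) \<subseteq> diag_matrices"
    by (auto simp: diag_matrices_def ketbra_def)
  ultimately show "mat.span (range (\<lambda>i. ketbra i i)) \<subseteq> diag_matrices"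
    by (rule mat.span_minimal[rotated])
next
  show "diag_matrices \<subseteq> mat.span (range (\<lambda>i. ketbra i i))"
  proof
    fix A :: "complex^'n^'n"
    assume diag: "A \<in> diag_matrices"
    have entry: "mscale a (ketbra k k) $ i $ j = (if i = k \<and> j = k then a else 0)"
      for a :: complex and k i j :: 'n
      by (simp add: mscale_def ketbra_def)
    have "(\<Sum>k\<in>UNIV. mscale (A $ k $ k) (ketbra k k)) $ i $ j = A $ i $ j" for i j
    proof -
      have "(\<Sum>k\<in>UNIV. mscale (A $ k $ k) (ketbra k k)) $ i $ j
          = (\<Sum>k\<in>UNIV. if i = k \<and> j = k then A $ k $ k else 0)"
        by (simp add: entry)
      also have "\<dots> = (if i = j then A $ i $ i else 0)"
        by (cases "i = j") (auto intro!: sum.neutral)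
      also have "\<dots> = A $ i $ j"
        using diag by (simp add: diag_matrices_def)
      finally show ?thesis .
    qed
    then have "A = (\<Sum>k\<in>UNIV. mscale (A $ k $ k) (ketbra k k))"
      by (simp add: vec_eq_iff)
    also have "\<dots> \<in> mat.span (range (\<lambda>i. ketbra i i))"
      by (intro mat.span_sum mat.span_scale mat.span_base) simp
    finally show "A \<in> mat.span (range (\<lambda>i. ketbra i i))" .
  qed
qed

lemma cycle_diagonal_0:
  fixes c :: "nat \<Rightarrow> 'n::finite"
  assumes "max_cycle c"
  shows "cycle_diagonal c 0 = range (\<lambda>i. ketbra i i)"
proof -
  have "cycle_diagonal c 0 = (\<lambda>i. ketbra i i) ` c ` {..<CARD('n)}"
    unfolding cycle_diagonal_def image_image by (intro image_cong refl) simp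
  also have "c ` {..<CARD('n)} = UNIV"
    using assms by (simp add: max_cycle_def bij_betw_def)
  finally show ?thesis .
qed

lemma cyclic_orbit_unique:
  fixes f :: "'a \<Rightarrow> 'a" and B S :: "nat \<Rightarrow> 'a set"
  assumes "B 0 = S 0" and "\<And>l. l < p \<Longrightarrow> f ` S l = S ((l + 1) mod p)"
  shows "(\<forall>l<p. f ` B l = B ((l + 1) mod p)) \<longleftrightarrow> (\<forall>l<p. B l = S l)"
proof
  assume step: "\<forall>l<p. f ` B l = B ((l + 1) mod p)"
  show "\<forall>l<p. B l = S l"
  proof (intro allI impI)
    fix l assume "l < p"
    then show "B l = S l"
    proof (induction l)
      case 0
      show ?case by (fact assms(1))
    next
      case (Suc l)
      then have "Suc l = (l + 1) mod p" by simp
      then show ?case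
        using Suc step assms(2)[of l] by (metis Suc_lessD)
    qed
  qed
next
  assume "\<forall>l<p. B l = S l"
  then show "\<forall>l<p. f ` B l = B ((l + 1) mod p)"
    using assms(2) by simp
qed

theorem mainTheorem8:
  fixes B :: "nat \<Rightarrow> (complex^'n::finite^'n) set"
    and c :: "nat \<Rightarrow> 'n"
  assumes subsp: "\<And>l. l < CARD('n) \<Longrightarrow> mat.subspace (B l)"
    and dims: "\<And>l. l < CARD('n) \<Longrightarrow> mat.dim (B l) = CARD('n)"
    and orth: "\<And>l m x y. l < CARD('n) \<Longrightarrow> m < CARD('n) \<Longrightarrow> l \<noteq> m \<Longrightarrow>
                 x \<in> B l \<Longrightarrow> y \<in> B m \<Longrightarrow> hs_inner x y = 0"
    and B0: "B 0 = diag_matrices"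
    and cyc: "max_cycle c"
  shows "(\<forall>l < CARD('n). (\<lambda>x. passage c ** x) ` B l = B ((l + 1) mod CARD('n)))
     \<longleftrightarrow> (\<forall>l < CARD('n). B l = mat.span {ketbra (c k) (c ((k + l) mod CARD('n))) | k. k < CARD('n)})"
proof -
  let ?p = "CARD('n)" and ?J = "\<lambda>X. passage c ** X"
  have generators: "cycle_diagonal c l = {ketbra (c k) (c ((k + l) mod ?p)) | k. k < ?p}" for l
    unfolding cycle_diagonal_def by blast
  have "B 0 = mat.span (cycle_diagonal c 0)"
    using B0 diag_matrices_span cycle_diagonal_0[OF cyc] by simp
  moreover have "?J ` mat.span (cycle_diagonal c l) = mat.span (cycle_diagonal c ((l + 1) mod ?p))" for l
    by (simp add: module_hom.span_image[OF left_mult_module_hom, symmetric]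
        passage_image_cycle_diagonal[OF cyc])
  ultimately show ?thesis
    using cyclic_orbit_unique[where f = ?J and S = "\<lambda>l. mat.span (cycle_diagonal c l)"]
    by (simp add: generators)
qed

end
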